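(* Let $I$ be a finite set of positive integers and $m=\max(I\cup\{0\})$. If $z_0$ is a real root of $d(I;z)$, then $z_0\le 2m-1$.
   Context: $d(I;z)$ is the descent polynomial: the unique polynomial whose value at each integer $n>m$ is the number of permutations $\pi\in\mathfrak S_n$ with $\{j\mid\pi_j>\pi_{j+1}\}=I$, evaluated at $z$. *)

theory Defs
  imports "HOL-Combinatorics.Permutations" "HOL-Computational_Algebra.Polynomial"
begin

definition descent_set :: "nat \<Rightarrow> (nat \<Rightarrow> nat) \<Rightarrow> nat set" where
  "descent_set n \<sigma> = {j \<in> {1..<n}. \<sigma> j > \<sigma> (Suc j)}"

definition descent_count :: "nat set \<Rightarrow> nat \<Rightarrow> nat" where
  "descent_count I n = card {\<sigma>. \<sigma> permutes {1..n} \<and> descent_set n \<sigma> = I}"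

definition descent_poly :: "nat set \<Rightarrow> real poly" where
  "descent_poly I = (THE p. \<forall>n. n > Max (I \<union> {0}) \<longrightarrow>
       poly p (real n) = real (descent_count I n))"

end

theory Submission
  imports Defs
begin

text \<open>Let m = max I, and split a permutation of {1..n}, n > m, after position m. The tail
  has no descents, so it lists the remaining values increasingly, and the head is a word whose
  standardization \<sigma> is a permutation of {1..m} with descent set I - {m}; the descent at m
  says that the head does not contain all of 1, ..., \<sigma>(m). Counting the possible value sets
  of the head gives
    d(I; n) = \<Sum>\<sigma> (C(n, m) - C(n - \<sigma>(m), m - \<sigma>(m))).
  For real z > m every summand C(z, m) - C(z - s, m - s) with 1 \<le> s \<le> m is positive, because
  C(z, m) = (z / m) C(z - 1, m - 1) and z / m > 1, and the sum is not empty. Hence all real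
  roots are at most m \<le> 2m - 1.\<close>

definition descents :: "nat list \<Rightarrow> nat set" where
  "descents xs = {j \<in> {1..<length xs}. xs ! (j - 1) > xs ! j}"

lemma descents_subset: "descents xs \<subseteq> {1..<length xs}"
  unfolding descents_def by auto

lemma descents_map_strict_mono_on:
  assumes "\<And>x y. x \<in> set xs \<Longrightarrow> y \<in> set xs \<Longrightarrow> g x < g y \<longleftrightarrow> x < y"
  shows "descents (map g xs) = descents xs"
  unfolding descents_def using assms by (auto simp: nth_map)

lemma descents_append:
  "descents (ys @ zs) = descents ys \<union> {j. j = length ys \<and> ys \<noteq> [] \<and> zs \<noteq> [] \<and> hd zs < last ys}
     \<union> (\<lambda>j. j + length ys) ` descents zs"
proof (rule set_eqI)
  fix j
  consider "j < length ys" | "j = length ys" | "j > length ys" by linarith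
  then show "j \<in> descents (ys @ zs) \<longleftrightarrow> j \<in> descents ys
      \<union> {j. j = length ys \<and> ys \<noteq> [] \<and> zs \<noteq> [] \<and> hd zs < last ys} \<union> (\<lambda>j. j + length ys) ` descents zs"
  proof cases
    case 1
    then show ?thesis unfolding descents_def by (auto simp: nth_append)
  next
    case 2
    then show ?thesis unfolding descents_def
      by (cases ys rule: rev_cases; cases zs) (auto simp: nth_append)
  next
    case 3
    then show ?thesis unfolding descents_def
      by (auto simp: nth_append image_iff intro!: exI[of _ "j - length ys"])
  qed
qed

lemma descents_eq_empty_iff_sorted: "descents xs = {} \<longleftrightarrow> sorted xs"
proof
  assume none: "descents xs = {}"
  show "sorted xs"
    unfolding sorted_iff_nth_Suc
  proof (intro allI impI)
    fix i assume "Suc i < length xs"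
    moreover have "Suc i \<notin> descents xs" using none by simp
    ultimately show "xs ! i \<le> xs ! Suc i" unfolding descents_def by auto
  qed
next
  assume "sorted xs"
  then show "descents xs = {}"
    unfolding descents_def by (auto simp: sorted_iff_nth_mono not_less) (metis diff_le_self not_le)
qed

definition lists_with_descents :: "nat \<Rightarrow> nat set \<Rightarrow> nat list set" where
  "lists_with_descents n J = {xs. distinct xs \<and> set xs = {1..n} \<and> descents xs = J}"

lemma length_lists_with_descents: "xs \<in> lists_with_descents n J \<Longrightarrow> length xs = n"
  unfolding lists_with_descents_def using distinct_card by fastforce

lemma finite_lists_with_descents: "finite (lists_with_descents n J)"
proof (rule finite_subset)
  show "lists_with_descents n J \<subseteq> {xs. set xs \<subseteq> {1..n} \<and> length xs = n}"
    using length_lists_with_descents unfolding lists_with_descents_def by auto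
qed (rule finite_lists_length_eq, simp)

lemma descent_set_eq_descents: "descent_set n \<sigma> = descents (map \<sigma> [1..<Suc n])"
  unfolding descents_def descent_set_def by (auto simp del: upt_Suc simp: nth_map)

lemma permutes_of_list:
  assumes "distinct xs" "set xs = {1..n}"
  obtains \<sigma> where "\<sigma> permutes {1..n}" "map \<sigma> [1..<Suc n] = xs"
proof -
  have len: "length xs = n" using assms distinct_card by fastforce
  define \<sigma> where "\<sigma> x = (if x \<in> {1..n} then xs ! (x - 1) else x)" for x
  have word: "map \<sigma> [1..<Suc n] = xs"
    by (rule nth_equalityI) (auto simp del: upt_Suc simp: len \<sigma>_def nth_map)
  have "bij_betw \<sigma> {1..n} {1..n}"
  proof (rule bij_betw_imageI)
    show "inj_on \<sigma> {1..n}"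
      using assms len by (auto simp: inj_on_def \<sigma>_def nth_eq_iff_index_eq)
    have "\<sigma> ` {1..n} = set (map \<sigma> [1..<Suc n])"
      by (simp del: upt_Suc add: atLeastLessThanSuc_atLeastAtMost)
    then show "\<sigma> ` {1..n} = {1..n}" using word assms(2) by (metis set_map)
  qed
  then have "\<sigma> permutes {1..n}" by (rule bij_imp_permutes) (auto simp: \<sigma>_def)
  then show ?thesis using word by (rule that)
qed

lemma descent_count_eq_card: "descent_count I n = card (lists_with_descents n I)"
proof -
  let ?P = "{\<sigma>. \<sigma> permutes {1..n} \<and> descent_set n \<sigma> = I}"
  let ?word = "\<lambda>\<sigma>. map \<sigma> [1..<Suc n]"
  have "bij_betw ?word ?P (lists_with_descents n I)"
  proof (rule bij_betw_imageI)
    show "inj_on ?word ?P"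
    proof (rule inj_onI, rule ext)
      fix \<sigma> \<tau> x assume "\<sigma> \<in> ?P" "\<tau> \<in> ?P" "?word \<sigma> = ?word \<tau>"
      then show "\<sigma> x = \<tau> x"
        by (cases "x \<in> {1..n}") (auto simp del: upt_Suc simp: map_eq_conv permutes_def)
    qed
    show "?word ` ?P = lists_with_descents n I"
    proof
      show "?word ` ?P \<subseteq> lists_with_descents n I"
      proof (rule image_subsetI)
        fix \<sigma> assume "\<sigma> \<in> ?P"
        then have "\<sigma> permutes {1..n}" "descent_set n \<sigma> = I" by auto
        then show "?word \<sigma> \<in> lists_with_descents n I"
          using permutes_inj_on[of \<sigma> "{1..n}"] permutes_image[of \<sigma> "{1..n}"]
          by (simp del: upt_Suc add: lists_with_descents_def distinct_map
              atLeastLessThanSuc_atLeastAtMost descent_set_eq_descents)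
      qed
    next
      show "lists_with_descents n I \<subseteq> ?word ` ?P"
      proof
        fix xs assume xs: "xs \<in> lists_with_descents n I"
        then have "distinct xs" "set xs = {1..n}" by (simp_all add: lists_with_descents_def)
        then obtain \<sigma> where "\<sigma> permutes {1..n}" "?word \<sigma> = xs" by (rule permutes_of_list)
        moreover have "descent_set n \<sigma> = I"
          using xs \<open>?word \<sigma> = xs\<close> by (simp add: descent_set_eq_descents lists_with_descents_def)
        ultimately show "xs \<in> ?word ` ?P" by force
      qed
    qed
  qed
  then show ?thesis unfolding descent_count_def by (rule bij_betw_same_card)
qed

lemma descents_append_sorted:
  assumes "sorted zs" "ys \<noteq> []" "zs \<noteq> []"
  shows "descents (ys @ zs) = descents ys \<union> {j. j = length ys \<and> hd zs < last ys}"
  using assms descents_append[of ys zs] descents_eq_empty_iff_sorted[of zs] by auto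

lemma last_in_lists_with_descents:
  assumes "\<sigma> \<in> lists_with_descents m J" "1 \<le> m"
  shows "last \<sigma> \<in> {1..m}"
proof -
  have "\<sigma> \<noteq> []" using length_lists_with_descents[OF assms(1)] assms(2) by auto
  then show ?thesis using assms(1) last_in_set by (auto simp: lists_with_descents_def)
qed

lemma descents_snoc_greater:
  assumes "\<forall>x\<in>set xs. x < y"
  shows "descents (xs @ [y]) = descents xs"
proof (cases "xs = []")
  case True
  then show ?thesis by (simp add: descents_def)
next
  case False
  then have "\<not> y < last xs" using assms last_in_set[of xs] by fastforce
  then show ?thesis using descents_append_sorted[of "[y]" xs] False by simp
qed

lemma descents_map_Suc_snoc_one:
  assumes "xs \<noteq> []" "0 \<notin> set xs"
  shows "descents (map Suc xs @ [1]) = insert (length xs) (descents xs)"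
proof -
  have "last xs \<noteq> 0" using assms last_in_set[of xs] by metis
  then have "1 < last (map Suc xs)" using assms(1) by (simp add: last_map)
  moreover have "descents (map Suc xs) = descents xs"
    by (rule descents_map_strict_mono_on) simp
  ultimately show ?thesis using descents_append_sorted[of "[1]" "map Suc xs"] assms(1) by auto
qed

lemma exists_list_with_descents:
  "\<exists>xs. xs \<in> lists_with_descents n (J \<inter> {1..<n})"
proof (induction n)
  case 0
  show ?case by (auto simp: lists_with_descents_def descents_def)
next
  case (Suc k)
  then obtain xs where "xs \<in> lists_with_descents k (J \<inter> {1..<k})" by blast
  then have xs: "distinct xs" "set xs = {1..k}" "descents xs = J \<inter> {1..<k}" and len: "length xs = k"
    by (auto simp: lists_with_descents_def length_lists_with_descents)
  show ?case
  proof (cases "k \<in> J \<and> 1 \<le> k")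
    case True
    let ?ys = "map Suc xs @ [1]"
    have "xs \<noteq> []" using len True by auto
    then have "descents ?ys = J \<inter> {1..<Suc k}"
      using descents_map_Suc_snoc_one[of xs] True xs(2,3) len by auto
    moreover have "distinct ?ys" using xs by (auto simp: distinct_map)
    moreover have "set ?ys = {1..Suc k}"
    proof -
      have "set ?ys = Suc ` {1..k} \<union> {1}" using xs(2) by simp
      also have "\<dots> = {1..Suc k}" by (auto simp: image_iff)
      finally show ?thesis .
    qed
    ultimately have "?ys \<in> lists_with_descents (Suc k) (J \<inter> {1..<Suc k})"
      by (simp add: lists_with_descents_def)
    then show ?thesis ..
  next
    case False
    let ?ys = "xs @ [Suc k]"
    have "J \<inter> {1..<Suc k} = J \<inter> {1..<k}"
      using False by (cases "k = 0") (auto simp: atLeastLessThanSuc)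
    then have "descents ?ys = J \<inter> {1..<Suc k}"
      using descents_snoc_greater[of xs "Suc k"] xs(2,3) by simp
    moreover have "distinct ?ys" using xs by auto
    moreover have "set ?ys = {1..Suc k}" using xs(2) by (auto simp: atLeastAtMostSuc_conv)
    ultimately have "?ys \<in> lists_with_descents (Suc k) (J \<inter> {1..<Suc k})"
      by (simp add: lists_with_descents_def)
    then show ?thesis ..
  qed
qed

definition complete_word :: "nat \<Rightarrow> nat list \<Rightarrow> nat list" where
  "complete_word n ys = ys @ sorted_list_of_set ({1..n} - set ys)"

text \<open>The prefixes ys of length m whose completion has a descent at position m.\<close>
definition top_descent_prefixes :: "nat \<Rightarrow> nat \<Rightarrow> nat set \<Rightarrow> nat list set" where
  "top_descent_prefixes n m J = {ys. length ys = m \<and> distinct ys \<and> set ys \<subseteq> {1..n}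
      \<and> descents ys = J \<and> Min ({1..n} - set ys) < last ys}"

lemma complete_word_in_lists_with_descents:
  assumes ys: "ys \<in> top_descent_prefixes n m J" and "1 \<le> m" "m < n"
  shows "complete_word n ys \<in> lists_with_descents n (insert m J)"
proof -
  define C where "C = {1..n} - set ys"
  have ys_props: "length ys = m" "distinct ys" "set ys \<subseteq> {1..n}" "descents ys = J"
      "Min C < last ys"
    using ys by (auto simp: top_descent_prefixes_def C_def)
  have "card (set ys) < card {1..n}"
    using ys_props(1,2) \<open>m < n\<close> by (simp add: distinct_card)
  then have "C \<noteq> {}"
    unfolding C_def using card_mono[of "set ys" "{1..n}"] by (metis Diff_eq_empty_iff List.finite_set not_le)
  then have rest: "sorted_list_of_set C \<noteq> []" "hd (sorted_list_of_set C) = Min C"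
    by (simp_all add: C_def sorted_list_of_set_nonempty)
  have "ys \<noteq> []" using ys_props(1) \<open>1 \<le> m\<close> by auto
  then have "descents (complete_word n ys) = insert m J"
    using descents_append_sorted[of "sorted_list_of_set C" ys] rest ys_props
    by (auto simp: complete_word_def C_def)
  moreover have "distinct (complete_word n ys)" "set (complete_word n ys) = {1..n}"
    using ys_props by (auto simp: complete_word_def)
  ultimately show ?thesis by (simp add: lists_with_descents_def)
qed

lemma lists_with_descents_split:
  assumes xs: "xs \<in> lists_with_descents n I" and "m \<in> I" "I \<subseteq> {1..m}" "m < n"
  shows "take m xs \<in> top_descent_prefixes n m (I - {m})" and "complete_word n (take m xs) = xs"
proof -
  define ys zs where "ys = take m xs" and "zs = drop m xs"
  have xs_eq: "xs = ys @ zs" unfolding ys_def zs_def by simp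
  have len: "length xs = n" using xs by (rule length_lists_with_descents)
  have xs_props: "distinct xs" "set xs = {1..n}" "descents xs = I"
    using xs by (auto simp: lists_with_descents_def)
  have ly: "length ys = m" and "ys \<noteq> []" "zs \<noteq> []"
    using len assms(2-4) by (auto simp: ys_def zs_def)
  have I_eq: "I = descents ys \<union> {j. j = m \<and> hd zs < last ys} \<union> (\<lambda>j. j + m) ` descents zs"
    using descents_append[of ys zs] xs_props(3) xs_eq ly \<open>ys \<noteq> []\<close> \<open>zs \<noteq> []\<close> by auto
  have "descents zs = {}"
    using I_eq assms(3) descents_subset[of zs] by fastforce
  then have "sorted zs" by (simp add: descents_eq_empty_iff_sorted)
  have zs_set: "set zs = {1..n} - set ys" and "distinct zs" "distinct ys"
    using xs_props(1,2) xs_eq by auto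
  then have zs_eq: "zs = sorted_list_of_set ({1..n} - set ys)"
    using \<open>sorted zs\<close> sorted_distinct_set_unique[of zs "sorted_list_of_set ({1..n} - set ys)"] by simp
  moreover have "{1..n} - set ys \<noteq> {}" using zs_set \<open>zs \<noteq> []\<close> by (metis set_empty)
  ultimately have "hd zs = Min ({1..n} - set ys)" by (simp add: sorted_list_of_set_nonempty)
  moreover have "descents ys \<subseteq> {1..<m}" using descents_subset[of ys] ly by simp
  ultimately have "descents ys = I - {m}" "Min ({1..n} - set ys) < last ys"
    using I_eq \<open>descents zs = {}\<close> assms(2,3) by auto
  moreover have "set ys \<subseteq> {1..n}" using xs_props(2) xs_eq by auto
  ultimately show "take m xs \<in> top_descent_prefixes n m (I - {m})"
    using ly \<open>distinct ys\<close> by (simp add: top_descent_prefixes_def ys_def)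
  show "complete_word n (take m xs) = xs"
    using xs_eq zs_eq by (simp add: complete_word_def ys_def)
qed

lemma card_lists_with_descents_eq_card_prefixes:
  assumes "m \<in> I" "I \<subseteq> {1..m}" "m < n"
  shows "card (lists_with_descents n I) = card (top_descent_prefixes n m (I - {m}))"
proof -
  have "1 \<le> m" using assms(1,2) by auto
  have "bij_betw (complete_word n) (top_descent_prefixes n m (I - {m})) (lists_with_descents n I)"
  proof (rule bij_betw_imageI)
    show "inj_on (complete_word n) (top_descent_prefixes n m (I - {m}))"
      by (rule inj_onI) (auto simp: complete_word_def top_descent_prefixes_def)
    have "insert m (I - {m}) = I" using assms(1) by auto
    then show "complete_word n ` top_descent_prefixes n m (I - {m}) = lists_with_descents n I"
      using complete_word_in_lists_with_descents[OF _ \<open>1 \<le> m\<close> assms(3), of _ "I - {m}"]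
        lists_with_descents_split[OF _ assms] by (metis (no_types, lifting) image_iff subsetI subset_antisym)
  qed
  then show ?thesis by (metis bij_betw_same_card)
qed

definition nth_smallest :: "nat set \<Rightarrow> nat \<Rightarrow> nat" where
  "nth_smallest A i = sorted_list_of_set A ! (i - 1)"

lemma nth_smallest_less_iff:
  assumes "finite A" "i \<in> {1..card A}" "j \<in> {1..card A}"
  shows "nth_smallest A i < nth_smallest A j \<longleftrightarrow> i < j"
proof -
  have mono: "nth_smallest A k < nth_smallest A l" if "1 \<le> k" "k < l" "l \<le> card A" for k l
    using that assms(1) sorted_wrt_nth_less[OF sorted_list_of_set.strict_sorted_key_list_of_set,
        of "k - 1" "l - 1" A]
    by (auto simp: nth_smallest_def)
  show ?thesis
    using mono[of i j] mono[of j i] assms(2,3) by (cases i j rule: linorder_cases) auto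
qed

lemma inj_on_nth_smallest:
  assumes "finite A"
  shows "inj_on (nth_smallest A) {1..card A}"
proof (rule inj_onI)
  fix i j assume "i \<in> {1..card A}" "j \<in> {1..card A}" "nth_smallest A i = nth_smallest A j"
  then show "i = j"
    using nth_smallest_less_iff[OF assms, of i j] nth_smallest_less_iff[OF assms, of j i]
    by (cases i j rule: linorder_cases) auto
qed

lemma nth_smallest_image:
  assumes "finite A"
  shows "nth_smallest A ` {1..card A} = A"
proof -
  have "{1..card A} = Suc ` {0..<card A}"
    by (simp add: image_Suc_atLeastLessThan atLeastLessThanSuc_atLeastAtMost)
  moreover have "nth_smallest A ` Suc ` {0..<card A} = (!) (sorted_list_of_set A) ` {0..<card A}"
    unfolding image_image by (simp add: nth_smallest_def)
  ultimately have "nth_smallest A ` {1..card A} = (!) (sorted_list_of_set A) ` {0..<card A}"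
    by simp
  also have "\<dots> = A" using assms nth_image[of "card A" "sorted_list_of_set A"] by simp
  finally show ?thesis .
qed

text \<open>Inverse of standardization: relabel the letters 1, ..., card A increasingly by the elements of A.\<close>
definition relabel :: "nat set \<Rightarrow> nat list \<Rightarrow> nat list" where
  "relabel A \<sigma> = map (nth_smallest A) \<sigma>"

lemma relabel_props:
  assumes "finite A" "card A = m" "distinct \<sigma>" "set \<sigma> = {1..m}"
  shows "distinct (relabel A \<sigma>)" and "set (relabel A \<sigma>) = A" and "length (relabel A \<sigma>) = m"
    and "descents (relabel A \<sigma>) = descents \<sigma>"
proof -
  show "distinct (relabel A \<sigma>)"
    using assms inj_on_nth_smallest[of A] by (simp add: relabel_def distinct_map)
  show "set (relabel A \<sigma>) = A" using assms nth_smallest_image[OF assms(1)] by (simp add: relabel_def)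
  show "length (relabel A \<sigma>) = m" using assms distinct_card by (fastforce simp: relabel_def)
  show "descents (relabel A \<sigma>) = descents \<sigma>"
    unfolding relabel_def using assms nth_smallest_less_iff
    by (intro descents_map_strict_mono_on) auto
qed

lemma relabel_eq_relabelD:
  assumes "finite A" "card A = m" "distinct \<sigma>" "set \<sigma> = {1..m}"
    and "finite B" "card B = m" "distinct \<tau>" "set \<tau> = {1..m}"
    and eq: "relabel A \<sigma> = relabel B \<tau>"
  shows "\<sigma> = \<tau> \<and> A = B"
proof -
  have "A = B"
    using eq relabel_props(2)[OF assms(1-4)] relabel_props(2)[OF assms(5-8)] by simp
  moreover have "inj_on (nth_smallest A) (set \<sigma> \<union> set \<tau>)"
    using inj_on_nth_smallest[OF assms(1)] assms(2,4,8) by simp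
  ultimately show ?thesis using eq by (simp add: relabel_def inj_on_map_eq_map)
qed

lemma relabel_surj:
  assumes "distinct ys"
  obtains \<sigma> where "distinct \<sigma>" "set \<sigma> = {1..length ys}" "relabel (set ys) \<sigma> = ys"
proof -
  let ?f = "nth_smallest (set ys)"
  have card: "card (set ys) = length ys" using assms by (rule distinct_card)
  have inj: "inj_on ?f {1..length ys}"
    using inj_on_nth_smallest[of "set ys"] card by simp
  have img: "?f ` {1..length ys} = set ys"
    using nth_smallest_image[of "set ys"] card by simp
  define \<sigma> where "\<sigma> = map (the_inv_into {1..length ys} ?f) ys"
  have "distinct \<sigma>"
    using assms inj_on_the_inv_into[OF inj, unfolded img] by (simp add: \<sigma>_def distinct_map)
  moreover have "set \<sigma> = {1..length ys}"
    using the_inv_into_onto[OF inj, unfolded img] by (simp add: \<sigma>_def)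
  moreover have "relabel (set ys) \<sigma> = ys"
    unfolding relabel_def \<sigma>_def map_map
    by (rule map_idI) (metis comp_apply f_the_inv_into_f[OF inj, unfolded img])
  ultimately show ?thesis by (rule that)
qed

lemma nth_smallest_ge:
  assumes "finite A" "0 \<notin> A" "s \<in> {1..card A}"
  shows "s \<le> nth_smallest A s"
  using assms(3)
proof (induction s)
  case 0
  then show ?case by simp
next
  case (Suc s)
  show ?case
  proof (cases "s = 0")
    case True
    have "nth_smallest A 1 \<in> A"
      using nth_smallest_image[OF assms(1)] Suc.prems by auto
    then show ?thesis using True assms(2) by (cases "nth_smallest A 1") auto
  next
    case False
    then have "s \<le> nth_smallest A s" "nth_smallest A s < nth_smallest A (Suc s)"
      using Suc nth_smallest_less_iff[OF assms(1), of s "Suc s"] by auto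
    then show ?thesis by simp
  qed
qed

lemma nth_smallest_initial_segment:
  assumes "finite A" "0 \<notin> A" "{1..s} \<subseteq> A" "1 \<le> s"
  shows "nth_smallest A s = s"
proof -
  define xs where "xs = [1..<Suc s] @ sorted_list_of_set (A - {1..s})"
  have "sorted_wrt (<) xs" "set xs = A"
    using assms(1-3) by (auto simp: xs_def sorted_wrt_append Suc_le_eq)
  then have "sorted_list_of_set A = xs"
    using assms(1) strict_sorted_equal[of xs "sorted_list_of_set A"] by simp
  then show ?thesis using assms(4) by (simp add: xs_def nth_smallest_def nth_append)
qed

lemma Min_complement_less_nth_smallest_iff:
  assumes "A \<subseteq> {1..n}" "card A < n" "s \<in> {1..card A}"
  shows "Min ({1..n} - A) < nth_smallest A s \<longleftrightarrow> \<not> {1..s} \<subseteq> A"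
proof -
  have "finite A" "0 \<notin> A" using assms(1) finite_subset by auto
  have s_in_A: "nth_smallest A s \<in> A"
    using nth_smallest_image[OF \<open>finite A\<close>] assms(3) by auto
  have "{1..n} - A \<noteq> {}"
  proof
    assume "{1..n} - A = {}"
    then have "card {1..n} \<le> card A" using \<open>finite A\<close> by (intro card_mono) auto
    then show False using assms(2) by simp
  qed
  then have Min_in: "Min ({1..n} - A) \<in> {1..n} - A" using Min_in[of "{1..n} - A"] by blast
  show ?thesis
  proof
    assume "Min ({1..n} - A) < nth_smallest A s"
    moreover have "nth_smallest A s = s" if "{1..s} \<subseteq> A"
      using nth_smallest_initial_segment[OF \<open>finite A\<close> \<open>0 \<notin> A\<close> that] assms(3) by simp
    ultimately show "\<not> {1..s} \<subseteq> A" using Min_in by fastforce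
  next
    assume "\<not> {1..s} \<subseteq> A"
    then obtain k where "k \<in> {1..s}" "k \<notin> A" by blast
    then have "Min ({1..n} - A) \<le> k" using assms by (intro Min_le) auto
    moreover have "k \<le> nth_smallest A s"
      using nth_smallest_ge[OF \<open>finite A\<close> \<open>0 \<notin> A\<close> assms(3)] \<open>k \<in> {1..s}\<close> by simp
    ultimately show "Min ({1..n} - A) < nth_smallest A s"
      using Min_in s_in_A by (metis DiffD2 le_neq_implies_less order.trans)
  qed
qed

lemma relabel_in_top_descent_prefixes_iff:
  assumes "distinct \<sigma>" "set \<sigma> = {1..m}" "A \<subseteq> {1..n}" "card A = m" "1 \<le> m" "m < n"
  shows "relabel A \<sigma> \<in> top_descent_prefixes n m J \<longleftrightarrow> descents \<sigma> = J \<and> \<not> {1..last \<sigma>} \<subseteq> A"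
proof -
  have "finite A" using assms(3) finite_subset by blast
  note props = relabel_props[OF \<open>finite A\<close> assms(4,1,2)]
  have "\<sigma> \<noteq> []" using assms(2,5) by auto
  then have last: "last \<sigma> \<in> {1..card A}" "last (relabel A \<sigma>) = nth_smallest A (last \<sigma>)"
    using assms(2,4) last_in_set[of \<sigma>] by (auto simp: relabel_def last_map)
  show ?thesis
    using props assms(3,4,6) Min_complement_less_nth_smallest_iff[OF assms(3) _ last(1)] last(2)
    by (auto simp: top_descent_prefixes_def)
qed

lemma top_descent_prefixes_relabel_cases:
  assumes ys: "ys \<in> top_descent_prefixes n m J" and "1 \<le> m" "m < n"
  obtains \<sigma> where "\<sigma> \<in> lists_with_descents m J" "set ys \<subseteq> {1..n}" "card (set ys) = m"
    "\<not> {1..last \<sigma>} \<subseteq> set ys" "relabel (set ys) \<sigma> = ys"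
proof -
  have ys_props: "distinct ys" "length ys = m" "set ys \<subseteq> {1..n}"
    using ys by (auto simp: top_descent_prefixes_def)
  then have "card (set ys) = m" by (simp add: distinct_card)
  obtain \<sigma> where \<sigma>: "distinct \<sigma>" "set \<sigma> = {1..m}" "relabel (set ys) \<sigma> = ys"
    using relabel_surj[OF ys_props(1)] ys_props(2) by metis
  then have "descents \<sigma> = J" "\<not> {1..last \<sigma>} \<subseteq> set ys"
    using relabel_in_top_descent_prefixes_iff[OF \<sigma>(1,2) ys_props(3) \<open>card (set ys) = m\<close> assms(2,3)] ys
    by simp_all
  then show ?thesis
    using that \<sigma> ys_props(3) \<open>card (set ys) = m\<close> by (simp add: lists_with_descents_def)
qed

lemma card_top_descent_prefixes:
  assumes "1 \<le> m" "m < n"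
  shows "card (top_descent_prefixes n m J) =
    (\<Sum>\<sigma>\<in>lists_with_descents m J. card {A. A \<subseteq> {1..n} \<and> card A = m \<and> \<not> {1..last \<sigma>} \<subseteq> A})"
proof -
  let ?S = "\<lambda>\<sigma>. {A. A \<subseteq> {1..n} \<and> card A = m \<and> \<not> {1..last \<sigma>} \<subseteq> A}"
  let ?P = "lists_with_descents m J"
  have "bij_betw (\<lambda>(\<sigma>, A). relabel A \<sigma>) (Sigma ?P ?S) (top_descent_prefixes n m J)"
  proof (rule bij_betw_imageI)
    have "\<sigma> = \<tau> \<and> A = B"
      if "\<sigma> \<in> ?P" "A \<in> ?S \<sigma>" "\<tau> \<in> ?P" "B \<in> ?S \<tau>" "relabel A \<sigma> = relabel B \<tau>"
      for \<sigma> A \<tau> B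
      using that finite_subset[of A "{1..n}"] finite_subset[of B "{1..n}"]
      by (intro relabel_eq_relabelD[of A m \<sigma> B \<tau>]) (simp_all add: lists_with_descents_def)
    then show "inj_on (\<lambda>(\<sigma>, A). relabel A \<sigma>) (Sigma ?P ?S)"
      by (intro inj_onI) (simp only: split_paired_all mem_Sigma_iff case_prod_conv prod.inject, blast)
    show "(\<lambda>(\<sigma>, A). relabel A \<sigma>) ` Sigma ?P ?S = top_descent_prefixes n m J"
    proof (intro equalityI subsetI)
      fix ys assume "ys \<in> (\<lambda>(\<sigma>, A). relabel A \<sigma>) ` Sigma ?P ?S"
      then obtain \<sigma> A where "\<sigma> \<in> ?P" "A \<in> ?S \<sigma>" "ys = relabel A \<sigma>" by auto
      then show "ys \<in> top_descent_prefixes n m J"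
        using relabel_in_top_descent_prefixes_iff[of \<sigma> m A n J] assms
        by (simp add: lists_with_descents_def)
    next
      fix ys assume "ys \<in> top_descent_prefixes n m J"
      then obtain \<sigma> where "\<sigma> \<in> ?P" "set ys \<subseteq> {1..n}" "card (set ys) = m"
        "\<not> {1..last \<sigma>} \<subseteq> set ys" "relabel (set ys) \<sigma> = ys"
        by (rule top_descent_prefixes_relabel_cases[OF _ assms])
      then show "ys \<in> (\<lambda>(\<sigma>, A). relabel A \<sigma>) ` Sigma ?P ?S"
        by (intro rev_image_eqI[of "(\<sigma>, set ys)"]) simp_all
    qed
  qed
  then have "card (top_descent_prefixes n m J) = card (Sigma ?P ?S)"
    by (rule bij_betw_same_card[symmetric])
  also have "\<dots> = (\<Sum>\<sigma>\<in>?P. card (?S \<sigma>))"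
  proof (rule card_SigmaI)
    have "finite (?S \<sigma>)" for \<sigma> by (rule finite_subset[of _ "Pow {1..n}"]) auto
    then show "\<forall>\<sigma>\<in>?P. finite (?S \<sigma>)" by blast
  qed (rule finite_lists_with_descents)
  finally show ?thesis .
qed

lemma card_subsets_containing_initial_segment:
  assumes "s \<le> m" "m \<le> n"
  shows "card {A. A \<subseteq> {1..n} \<and> card A = m \<and> {1..s} \<subseteq> A} = (n - s) choose (m - s)"
proof -
  have "bij_betw (\<lambda>B. B \<union> {1..s}) {B. B \<subseteq> {Suc s..n} \<and> card B = m - s}
      {A. A \<subseteq> {1..n} \<and> card A = m \<and> {1..s} \<subseteq> A}"
  proof (rule bij_betw_imageI)
    show "inj_on (\<lambda>B. B \<union> {1..s}) {B. B \<subseteq> {Suc s..n} \<and> card B = m - s}"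
    proof (rule inj_onI)
      fix B C assume "B \<in> {B. B \<subseteq> {Suc s..n} \<and> card B = m - s}"
        "C \<in> {B. B \<subseteq> {Suc s..n} \<and> card B = m - s}" and eq: "B \<union> {1..s} = C \<union> {1..s}"
      then have "B = (B \<union> {1..s}) - {1..s}" "C = (C \<union> {1..s}) - {1..s}" by auto
      then show "B = C" unfolding eq by simp
    qed
    show "(\<lambda>B. B \<union> {1..s}) ` {B. B \<subseteq> {Suc s..n} \<and> card B = m - s}
        = {A. A \<subseteq> {1..n} \<and> card A = m \<and> {1..s} \<subseteq> A}"
    proof (intro equalityI subsetI)
      fix A assume "A \<in> (\<lambda>B. B \<union> {1..s}) ` {B. B \<subseteq> {Suc s..n} \<and> card B = m - s}"
      then obtain B where B: "B \<subseteq> {Suc s..n}" "card B = m - s" "A = B \<union> {1..s}" by blast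
      have "finite B" using finite_subset[OF B(1)] by simp
      moreover have "B \<inter> {1..s} = {}" using B(1) by auto
      ultimately have "card A = card B + card {1..s}" using B(3) by (simp add: card_Un_disjoint)
      then show "A \<in> {A. A \<subseteq> {1..n} \<and> card A = m \<and> {1..s} \<subseteq> A}"
        using B assms by auto
    next
      fix A assume A: "A \<in> {A. A \<subseteq> {1..n} \<and> card A = m \<and> {1..s} \<subseteq> A}"
      then have "card (A - {1..s}) = m - s"
        using finite_subset[of A "{1..n}"] by (simp add: card_Diff_subset)
      moreover have "A - {1..s} \<subseteq> {Suc s..n}" "A = (A - {1..s}) \<union> {1..s}" using A by auto
      ultimately show "A \<in> (\<lambda>B. B \<union> {1..s}) ` {B. B \<subseteq> {Suc s..n} \<and> card B = m - s}"
        by blast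
    qed
  qed
  then show ?thesis
    using bij_betw_same_card n_subsets[of "{Suc s..n}" "m - s"] by fastforce
qed

lemma card_subsets_not_containing_initial_segment:
  assumes "s \<le> m" "m \<le> n"
  shows "real (card {A. A \<subseteq> {1..n} \<and> card A = m \<and> \<not> {1..s} \<subseteq> A})
    = real (n choose m) - real ((n - s) choose (m - s))"
proof -
  let ?all = "{A. A \<subseteq> {1..n} \<and> card A = m}"
  let ?cont = "{A. A \<subseteq> {1..n} \<and> card A = m \<and> {1..s} \<subseteq> A}"
  have "finite ?all" by (rule finite_subset[of _ "Pow {1..n}"]) auto
  moreover have "?cont \<subseteq> ?all" by blast
  ultimately have "real (card (?all - ?cont)) = real (card ?all) - real (card ?cont)"
    by (simp add: card_Diff_subset card_mono finite_subset of_nat_diff)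
  moreover have "{A. A \<subseteq> {1..n} \<and> card A = m \<and> \<not> {1..s} \<subseteq> A} = ?all - ?cont" by blast
  ultimately show ?thesis
    using n_subsets[of "{1..n}" m] card_subsets_containing_initial_segment[OF assms] by simp
qed

lemma gbinomial_pos:
  fixes a :: real
  assumes "a > real k - 1"
  shows "a gchoose k > 0"
  unfolding gbinomial_altdef_of_nat using assms by (intro prod_pos) auto

lemma gbinomial_diff_one_less:
  fixes z :: real
  assumes "m \<ge> 1" "z > real m"
  shows "(z - 1) gchoose (m - 1) < z gchoose m"
proof -
  have "(z - 1) gchoose (m - 1) > 0"
    using assms by (intro gbinomial_pos) (simp add: of_nat_diff)
  moreover have "z / real m > 1" using assms by simp
  ultimately have "(z - 1) gchoose (m - 1) < (z / real m) * ((z - 1) gchoose (m - 1))"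
    using mult_strict_right_mono by fastforce
  also have "\<dots> = z gchoose m"
    using gbinomial_absorption'[of m z] assms(1) by simp
  finally show ?thesis .
qed

lemma gbinomial_shift_less:
  fixes z :: real
  assumes "1 \<le> s" "s \<le> m" "z > real m"
  shows "(z - real s) gchoose (m - s) < z gchoose m"
  using assms
proof (induction s arbitrary: z m)
  case 0
  then show ?case by simp
next
  case (Suc s)
  have "(z - 1) gchoose (m - 1) < z gchoose m"
    using Suc.prems by (intro gbinomial_diff_one_less) auto
  moreover have "(z - 1 - real s) gchoose (m - 1 - s) < (z - 1) gchoose (m - 1)" if "s \<ge> 1"
    using Suc.prems that by (intro Suc.IH) (auto simp: of_nat_diff)
  ultimately show ?case
    by (cases "s = 0") (auto simp: algebra_simps diff_diff_add)
qed

definition gbinomial_poly :: "nat \<Rightarrow> real poly" where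
  "gbinomial_poly k = smult (1 / fact k) (\<Prod>i = 0..<k. [:- of_nat i, 1:])"

lemma poly_gbinomial_poly: "poly (gbinomial_poly k) x = x gchoose k"
  unfolding gbinomial_poly_def gbinomial_prod_rev by (simp add: poly_prod divide_inverse mult.commute)

lemma descent_poly_eqI:
  assumes "\<And>n. n > Max (I \<union> {0}) \<Longrightarrow> poly p (real n) = real (descent_count I n)"
  shows "descent_poly I = p"
  unfolding descent_poly_def
proof (rule the_equality)
  fix q assume q: "\<forall>n. n > Max (I \<union> {0}) \<longrightarrow> poly q (real n) = real (descent_count I n)"
  have "real ` {Suc (Max (I \<union> {0}))..} \<subseteq> {x. poly (q - p) x = 0}"
    using q assms by auto
  moreover have "infinite (real ` {Suc (Max (I \<union> {0}))..})"
    using finite_imageD[OF _ inj_on_of_nat] infinite_Ici by blast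
  ultimately have "infinite {x. poly (q - p) x = 0}" using finite_subset by blast
  then show "q = p" using poly_roots_finite[of "q - p"] by auto
qed (use assms in auto)

lemma descent_count_eq_sum:
  assumes "m \<in> I" "I \<subseteq> {1..m}" "m < n"
  shows "real (descent_count I n) =
    (\<Sum>\<sigma>\<in>lists_with_descents m (I - {m}). real (n choose m) - real ((n - last \<sigma>) choose (m - last \<sigma>)))"
proof -
  have "1 \<le> m" using assms(1,2) by auto
  have "real (descent_count I n) = (\<Sum>\<sigma>\<in>lists_with_descents m (I - {m}).
      real (card {A. A \<subseteq> {1..n} \<and> card A = m \<and> \<not> {1..last \<sigma>} \<subseteq> A}))"
    by (simp add: descent_count_eq_card card_lists_with_descents_eq_card_prefixes[OF assms]
        card_top_descent_prefixes[OF \<open>1 \<le> m\<close> assms(3)])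
  also have "\<dots> = (\<Sum>\<sigma>\<in>lists_with_descents m (I - {m}).
      real (n choose m) - real ((n - last \<sigma>) choose (m - last \<sigma>)))"
    using last_in_lists_with_descents[OF _ \<open>1 \<le> m\<close>] assms(3)
    by (intro sum.cong refl card_subsets_not_containing_initial_segment) auto
  finally show ?thesis .
qed

lemma poly_descent_poly:
  assumes "m \<in> I" "I \<subseteq> {1..m}"
  shows "poly (descent_poly I) z =
    (\<Sum>\<sigma>\<in>lists_with_descents m (I - {m}). (z gchoose m) - ((z - real (last \<sigma>)) gchoose (m - last \<sigma>)))"
proof -
  define p where "p = (\<Sum>\<sigma>\<in>lists_with_descents m (I - {m}).
    gbinomial_poly m - gbinomial_poly (m - last \<sigma>) \<circ>\<^sub>p [:- of_nat (last \<sigma>), 1:])"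
  have poly_p: "poly p z = (\<Sum>\<sigma>\<in>lists_with_descents m (I - {m}).
      (z gchoose m) - ((z - real (last \<sigma>)) gchoose (m - last \<sigma>)))" for z
    unfolding p_def by (simp add: poly_sum poly_pcompose poly_gbinomial_poly)
  have "Max (I \<union> {0}) = m"
    using assms by (intro Max_eqI) (auto simp: finite_subset)
  have "descent_poly I = p"
  proof (rule descent_poly_eqI)
    fix n assume "Max (I \<union> {0}) < n"
    then have "m < n" using \<open>Max (I \<union> {0}) = m\<close> by simp
    have "last \<sigma> \<le> n" if "\<sigma> \<in> lists_with_descents m (I - {m})" for \<sigma>
      using last_in_lists_with_descents[OF that] assms \<open>m < n\<close> by force
    then show "poly p (real n) = real (descent_count I n)"
      unfolding poly_p descent_count_eq_sum[OF assms \<open>m < n\<close>]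
      by (intro sum.cong refl) (simp add: binomial_gbinomial of_nat_diff)
  qed
  then show ?thesis by (simp add: poly_p)
qed

lemma poly_descent_poly_pos:
  assumes "m \<in> I" "I \<subseteq> {1..m}" "z > real m"
  shows "poly (descent_poly I) z > 0"
proof -
  have "1 \<le> m" using assms(1,2) by auto
  obtain \<sigma> where "\<sigma> \<in> lists_with_descents m ((I - {m}) \<inter> {1..<m})"
    using exists_list_with_descents by blast
  moreover have "(I - {m}) \<inter> {1..<m} = I - {m}" using assms(2) by auto
  ultimately have "lists_with_descents m (I - {m}) \<noteq> {}" by auto
  moreover have "0 < (z gchoose m) - ((z - real (last \<sigma>)) gchoose (m - last \<sigma>))"
    if "\<sigma> \<in> lists_with_descents m (I - {m})" for \<sigma>
    using gbinomial_shift_less[of "last \<sigma>" m z] last_in_lists_with_descents[OF that \<open>1 \<le> m\<close>]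
      assms(3) by simp
  ultimately show ?thesis
    unfolding poly_descent_poly[OF assms(1,2)] by (intro sum_pos finite_lists_with_descents)
qed

lemma descent_count_empty:
  assumes "0 < n"
  shows "descent_count {} n = 1"
proof -
  have "lists_with_descents n {} = {[1..<Suc n]}"
    using sorted_distinct_set_unique[of _ "[1..<Suc n]"]
    by (auto simp del: upt_Suc simp: lists_with_descents_def descents_eq_empty_iff_sorted
        atLeastLessThanSuc_atLeastAtMost)
  then show ?thesis by (simp add: descent_count_eq_card)
qed

lemma Max_positive_set:
  fixes I :: "nat set"
  assumes "finite I" "0 \<notin> I" "I \<noteq> {}"
  shows "Max I \<in> I" "I \<subseteq> {1..Max I}" "Max (I \<union> {0}) = Max I"
proof -
  show "Max I \<in> I" using assms(1,3) by simp
  show "I \<subseteq> {1..Max I}"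
  proof
    fix i assume "i \<in> I"
    moreover have "i \<noteq> 0" using \<open>i \<in> I\<close> assms(2) by metis
    ultimately show "i \<in> {1..Max I}" using assms(1) by simp
  qed
  show "Max (I \<union> {0}) = Max I"
    using assms(1,3) by (simp add: Max_Un)
qed

theorem proposition4p19:
  fixes I :: "nat set" and z0 :: real
  assumes "finite I" and "0 \<notin> I"
    and "poly (descent_poly I) z0 = 0"
  shows "z0 \<le> 2 * real (Max (I \<union> {0})) - 1"
proof (cases "I = {}")
  case True
  then have "descent_poly I = 1"
    by (intro descent_poly_eqI) (simp add: descent_count_empty)
  then show ?thesis using assms(3) by simp
next
  case False
  define m where "m = Max I"
  have m: "m \<in> I" "I \<subseteq> {1..m}" "Max (I \<union> {0}) = m"
    using Max_positive_set[OF assms(1,2) False] by (simp_all add: m_def)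
  show ?thesis
  proof (rule ccontr)
    assume "\<not> ?thesis"
    moreover have "1 \<le> m" using m(1,2) by auto
    ultimately have "z0 > real m" using m(3) by simp
    with poly_descent_poly_pos[OF m(1,2)] assms(3) show False by fastforce
  qed
qed

end
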